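(* Let $X=\{x_1,\ldots,x_n\}$, $S=K[x_1,\ldots,x_n]$ over a field $K$, and let $F_1,\ldots,F_s\subset X$ be pairwise disjoint with $|F_i|=k>1$ for all $i$. Let $f_1,\ldots,f_{k^s}$ be the minimal monomial generators of $P_{F_1}\cdots P_{F_s}$, ordered (decreasingly) with respect to the lexicographic order with $x_1>x_2>\cdots>x_n$. For $i=2,\ldots,k^s$ let $n_i$ be the minimal number of homogeneous generators of $(f_1,\ldots,f_{i-1}):(f_i)$. Then $$\max\{n_i:i=2,\ldots,k^s\}=n_{k^s}=(k-1)s.$$ Moreover, for all $i$, the colon ideal $(f_1,\ldots,f_{i-1}):(f_i)$ is generated by linear forms.
   Context: For $F\subseteq X$, $P_F=(x_i:x_i\in F)\subset S$. *)

theory Defs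
  imports "HOL-Library.Poly_Mapping"
begin

(* Polynomials over a field 'a in variables x_i (i :: nat): monomials are
exponent vectors (nat \<Rightarrow>\<^sub>0 nat), polynomials are finitely supported maps
from monomials to coefficients, with the convolution product of Poly_Mapping. *)

type_synonym monomial = "nat \<Rightarrow>\<^sub>0 nat"
type_synonym 'a mpoly = "monomial \<Rightarrow>\<^sub>0 'a"

definition polyring :: "nat \<Rightarrow> ('a::field) mpoly set" where
  "polyring n = {p. \<forall>m\<in>Poly_Mapping.keys p. Poly_Mapping.keys m \<subseteq> {1..n}}"

definition monom :: "monomial \<Rightarrow> ('a::field) mpoly" where
  "monom m = Poly_Mapping.single m 1"

definition var :: "nat \<Rightarrow> ('a::field) mpoly" where
  "var i = monom (Poly_Mapping.single i 1)"

definition mdeg :: "monomial \<Rightarrow> nat" where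
  "mdeg m = (\<Sum>v\<in>Poly_Mapping.keys m. Poly_Mapping.lookup m v)"

definition homogeneous :: "('a::field) mpoly \<Rightarrow> bool" where
  "homogeneous p \<longleftrightarrow> (\<exists>d. \<forall>m\<in>Poly_Mapping.keys p. mdeg m = d)"

definition linear_form :: "('a::field) mpoly \<Rightarrow> bool" where
  "linear_form p \<longleftrightarrow> (\<forall>m\<in>Poly_Mapping.keys p. mdeg m = 1)"

definition ideal_gen :: "nat \<Rightarrow> ('a::field) mpoly set \<Rightarrow> 'a mpoly set" where
  "ideal_gen n G = {(\<Sum>g\<in>A. q g * g) | A q. finite A \<and> A \<subseteq> G \<and> (\<forall>g\<in>A. q g \<in> polyring n)}"

definition colon :: "nat \<Rightarrow> ('a::field) mpoly set \<Rightarrow> 'a mpoly \<Rightarrow> 'a mpoly set" where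
  "colon n I f = {p \<in> polyring n. p * f \<in> I}"

definition ideal_mult :: "nat \<Rightarrow> ('a::field) mpoly set \<Rightarrow> 'a mpoly set \<Rightarrow> 'a mpoly set" where
  "ideal_mult n I J = ideal_gen n {a * b | a b. a \<in> I \<and> b \<in> J}"

fun ideal_prod :: "nat \<Rightarrow> (nat \<Rightarrow> ('a::field) mpoly set) \<Rightarrow> nat \<Rightarrow> 'a mpoly set" where
  "ideal_prod n P 0 = polyring n"
| "ideal_prod n P (Suc s) = ideal_mult n (ideal_prod n P s) (P (Suc s))"

definition var_ideal :: "nat \<Rightarrow> nat set \<Rightarrow> ('a::field) mpoly set" where
  "var_ideal n F = ideal_gen n (var ` F)"

definition mdvd :: "monomial \<Rightarrow> monomial \<Rightarrow> bool" where
  "mdvd m m' \<longleftrightarrow> (\<forall>v. Poly_Mapping.lookup m v \<le> Poly_Mapping.lookup m' v)"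

definition min_monomial_gens :: "nat \<Rightarrow> ('a::field) mpoly set \<Rightarrow> monomial set" where
  "min_monomial_gens n I =
     {m. Poly_Mapping.keys m \<subseteq> {1..n} \<and> (monom m :: 'a mpoly) \<in> I \<and>
         (\<forall>m'. Poly_Mapping.keys m' \<subseteq> {1..n} \<and> (monom m' :: 'a mpoly) \<in> I \<and> mdvd m' m \<longrightarrow> m' = m)}"

definition lex_gt :: "monomial \<Rightarrow> monomial \<Rightarrow> bool" where
  "lex_gt m m' \<longleftrightarrow> (\<exists>v. Poly_Mapping.lookup m' v < Poly_Mapping.lookup m v \<and> (\<forall>u<v. Poly_Mapping.lookup m u = Poly_Mapping.lookup m' u))"

definition min_num_hom_gens :: "nat \<Rightarrow> ('a::field) mpoly set \<Rightarrow> nat" where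
  "min_num_hom_gens n I = (LEAST c. \<exists>G. finite G \<and> card G = c \<and> G \<subseteq> polyring n \<and>
      (\<forall>g\<in>G. homogeneous g) \<and> ideal_gen n G = I)"

end

theory Submission
  imports Defs "HOL-Library.Function_Algebras" "HOL.Vector_Spaces"
begin

(* The minimal generators of P_{F_1}\<cdots>P_{F_s} are the monomials x_{a_1}\<cdots>x_{a_s} with
   a_j \<in> F_j; being squarefree of the same degree, they are pairwise incomparable.
   For such a generator, the colon ideal of the lex-larger generators by it is generated by the
   variables x_b with b \<in> F_j and b < a_j for some j: exchanging a_j for b gives a lex-larger
   generator dividing x_b x_{a_1}\<cdots>x_{a_s}, and conversely the first variable at which a
   lex-larger generator differs from x_{a_1}\<cdots>x_{a_s} is of that kind.
   An ideal generated by a set B of variables needs exactly |B| homogeneous generators, since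
   their linear parts must span |B| independent vectors. Hence n_i \<le> \<Sigma>_j (|F_j| - 1) = (k - 1) s,
   with equality at the lex-smallest generator, where every a_j is the largest element of F_j. *)

section \<open>Ideals of the polynomial ring\<close>

lemma polyring_add: "p \<in> polyring n \<Longrightarrow> q \<in> polyring n \<Longrightarrow> p + q \<in> polyring n"
  unfolding polyring_def
proof clarify
  fix m v assume p: "\<forall>m\<in>Poly_Mapping.keys p. Poly_Mapping.keys m \<subseteq> {1..n}"
    and q: "\<forall>m\<in>Poly_Mapping.keys q. Poly_Mapping.keys m \<subseteq> {1..n}"
    and m: "m \<in> Poly_Mapping.keys (p + q)" and v: "v \<in> Poly_Mapping.keys m"
  have "m \<in> Poly_Mapping.keys p \<or> m \<in> Poly_Mapping.keys q" using keys_add[of p q] m by blast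
  then show "v \<in> {1..n}" using p q v by blast
qed

lemma polyring_mult: "p \<in> polyring n \<Longrightarrow> q \<in> polyring n \<Longrightarrow> p * q \<in> polyring n"
  unfolding polyring_def
proof clarify
  fix m v assume p: "\<forall>m\<in>Poly_Mapping.keys p. Poly_Mapping.keys m \<subseteq> {1..n}"
    and q: "\<forall>m\<in>Poly_Mapping.keys q. Poly_Mapping.keys m \<subseteq> {1..n}"
    and m: "m \<in> Poly_Mapping.keys (p * q)" and v: "v \<in> Poly_Mapping.keys m"
  obtain a b where "m = a + b" "a \<in> Poly_Mapping.keys p" "b \<in> Poly_Mapping.keys q"
    using keys_mult m by blast
  then show "v \<in> {1..n}" using p q v keys_add[of a b] by blast
qed

lemma polyring_zero: "0 \<in> polyring n"
  unfolding polyring_def by simp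

lemma polyring_one: "1 \<in> polyring n"
  unfolding polyring_def by simp

lemma polyring_single: "Poly_Mapping.keys m \<subseteq> {1..n} \<Longrightarrow> Poly_Mapping.single m c \<in> polyring n"
  unfolding polyring_def by simp

lemma polyring_monom: "Poly_Mapping.keys m \<subseteq> {1..n} \<Longrightarrow> monom m \<in> polyring n"
  unfolding monom_def by (rule polyring_single)

definition is_ideal :: "nat \<Rightarrow> ('a::field) mpoly set \<Rightarrow> bool" where
  "is_ideal n I \<longleftrightarrow> 0 \<in> I \<and> (\<forall>x\<in>I. \<forall>y\<in>I. x + y \<in> I) \<and> (\<forall>p\<in>polyring n. \<forall>x\<in>I. p * x \<in> I)"

lemma is_ideal_polyring: "is_ideal n (polyring n)"
  unfolding is_ideal_def using polyring_zero polyring_add polyring_mult by blast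

lemma is_ideal_Int: "is_ideal n I \<Longrightarrow> is_ideal n J \<Longrightarrow> is_ideal n (I \<inter> J)"
  unfolding is_ideal_def by blast

lemma is_ideal_mult_preimage:
  assumes "is_ideal n I" shows "is_ideal n {x. x * h \<in> I}"
  using assms unfolding is_ideal_def by (simp add: distrib_right mult.assoc)

lemma is_ideal_sum: "is_ideal n I \<Longrightarrow> (\<And>x. x \<in> A \<Longrightarrow> h x \<in> I) \<Longrightarrow> sum h A \<in> I"
  by (induction A rule: infinite_finite_induct) (simp_all add: is_ideal_def)

lemma ideal_gen_least: "is_ideal n (I :: 'a::field mpoly set) \<Longrightarrow> G \<subseteq> I \<Longrightarrow> ideal_gen n G \<subseteq> I"
  unfolding ideal_gen_def
proof clarify
  fix A and q :: "'a mpoly \<Rightarrow> 'a mpoly"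
  assume I: "is_ideal n I" and "G \<subseteq> I" "A \<subseteq> G" "\<forall>g\<in>A. q g \<in> polyring n"
  then have "q g * g \<in> I" if "g \<in> A" for g
    using that unfolding is_ideal_def by blast
  then show "(\<Sum>g\<in>A. q g * g) \<in> I" by (rule is_ideal_sum[OF I])
qed

lemma ideal_gen_base: "G \<subseteq> ideal_gen n G"
proof
  fix g assume "g \<in> G"
  then show "g \<in> ideal_gen n G" unfolding ideal_gen_def
    by (intro CollectI exI[of _ "{g}"] exI[of _ "\<lambda>_. 1"]) (simp add: polyring_one)
qed

lemma ideal_gen_mono: "G \<subseteq> H \<Longrightarrow> ideal_gen n G \<subseteq> ideal_gen n H"
  unfolding ideal_gen_def by blast

lemma is_ideal_ideal_gen: "is_ideal n (ideal_gen n (G :: 'a::field mpoly set))"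
  unfolding is_ideal_def
proof (intro conjI ballI)
  show "0 \<in> ideal_gen n G"
    unfolding ideal_gen_def by (intro CollectI exI[of _ "{}"]) auto
next
  fix x y assume "x \<in> ideal_gen n G" "y \<in> ideal_gen n G"
  then obtain A B and q r :: "'a mpoly \<Rightarrow> 'a mpoly"
    where x: "x = (\<Sum>g\<in>A. q g * g)" "finite A" "A \<subseteq> G" "\<forall>g\<in>A. q g \<in> polyring n"
    and y: "y = (\<Sum>g\<in>B. r g * g)" "finite B" "B \<subseteq> G" "\<forall>g\<in>B. r g \<in> polyring n"
    unfolding ideal_gen_def by blast
  define q' where "q' g = (if g \<in> A then q g else 0)" for g
  define r' where "r' g = (if g \<in> B then r g else 0)" for g
  have "x = (\<Sum>g\<in>A \<union> B. q' g * g)" "y = (\<Sum>g\<in>A \<union> B. r' g * g)"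
    unfolding x(1) y(1) q'_def r'_def using x(2) y(2)
    by (auto intro: sum.mono_neutral_cong_left)
  then have "x + y = (\<Sum>g\<in>A \<union> B. (q' g + r' g) * g)"
    by (simp add: distrib_right sum.distrib)
  moreover have "\<forall>g\<in>A \<union> B. q' g + r' g \<in> polyring n"
    using x(4) y(4) by (simp add: q'_def r'_def polyring_add polyring_zero)
  ultimately show "x + y \<in> ideal_gen n G"
    unfolding ideal_gen_def using x(2,3) y(2,3)
    by (intro CollectI exI[of _ "A \<union> B"] exI[of _ "\<lambda>g. q' g + r' g"]) auto
next
  fix p x :: "'a mpoly" assume p: "p \<in> polyring n" and "x \<in> ideal_gen n G"
  then obtain A and q :: "'a mpoly \<Rightarrow> 'a mpoly"
    where x: "x = (\<Sum>g\<in>A. q g * g)" "finite A" "A \<subseteq> G" "\<forall>g\<in>A. q g \<in> polyring n"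
    unfolding ideal_gen_def by blast
  then have "p * x = (\<Sum>g\<in>A. (p * q g) * g)" "\<forall>g\<in>A. p * q g \<in> polyring n"
    using p by (auto simp: sum_distrib_left mult.assoc intro: polyring_mult)
  then show "p * x \<in> ideal_gen n G"
    unfolding ideal_gen_def using x(2,3)
    by (intro CollectI exI[of _ A] exI[of _ "\<lambda>g. p * q g"]) auto
qed

lemma ideal_gen_mult: "p \<in> polyring n \<Longrightarrow> x \<in> ideal_gen n G \<Longrightarrow> p * x \<in> ideal_gen n G"
  using is_ideal_ideal_gen[of n G] unfolding is_ideal_def by blast

lemma ideal_gen_one: "ideal_gen n {1 :: 'a::field mpoly} = polyring n"
proof
  show "ideal_gen n {1 :: 'a mpoly} \<subseteq> polyring n"
    by (rule ideal_gen_least[OF is_ideal_polyring]) (simp add: polyring_one)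
  have "p * 1 \<in> ideal_gen n {1 :: 'a mpoly}" if "p \<in> polyring n" for p
    by (rule ideal_gen_mult[OF that subsetD[OF ideal_gen_base]]) simp
  then show "polyring n \<subseteq> ideal_gen n {1 :: 'a mpoly}" by auto
qed

lemma ideal_mult_ideal_gen:
  "ideal_mult n (ideal_gen n A) (ideal_gen n B) = ideal_gen n {a * b | a b. a \<in> A \<and> b \<in> (B :: 'a::field mpoly set)}"
proof
  define J where "J = ideal_gen n {a * b | a b. a \<in> A \<and> b \<in> B}"
  have J: "is_ideal n J" unfolding J_def by (rule is_ideal_ideal_gen)
  have "a * b \<in> J" if "a \<in> A" "b \<in> B" for a b
    unfolding J_def by (rule subsetD[OF ideal_gen_base]) (use that in blast)
  then have "ideal_gen n A \<subseteq> {a. a * b \<in> J}" if "b \<in> B" for b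
    by (intro ideal_gen_least[OF is_ideal_mult_preimage[OF J]]) (use that in blast)
  then have "ideal_gen n B \<subseteq> {b. b * a \<in> J}" if "a \<in> ideal_gen n A" for a
    by (intro ideal_gen_least[OF is_ideal_mult_preimage[OF J]]) (use that in \<open>auto simp: mult.commute\<close>)
  then have "{a * b | a b. a \<in> ideal_gen n A \<and> b \<in> ideal_gen n B} \<subseteq> J"
    by (auto simp: mult.commute)
  then show "ideal_mult n (ideal_gen n A) (ideal_gen n B) \<subseteq> J"
    unfolding ideal_mult_def by (rule ideal_gen_least[OF J])
  have "{a * b | a b. a \<in> A \<and> b \<in> B} \<subseteq> {a * b | a b. a \<in> ideal_gen n A \<and> b \<in> ideal_gen n B}"
    using ideal_gen_base by blast
  then show "J \<subseteq> ideal_mult n (ideal_gen n A) (ideal_gen n B)"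
    unfolding J_def ideal_mult_def by (rule ideal_gen_mono)
qed

lemma is_ideal_colon: "is_ideal n I \<Longrightarrow> is_ideal n (colon n I g)"
proof -
  assume "is_ideal n I"
  then have "is_ideal n (polyring n \<inter> {p. p * g \<in> I})"
    by (intro is_ideal_Int is_ideal_polyring is_ideal_mult_preimage)
  moreover have "colon n I g = polyring n \<inter> {p. p * g \<in> I}" unfolding colon_def by blast
  ultimately show ?thesis by simp
qed

section \<open>Monomial ideals and the lexicographic order\<close>

lemma monom_mult: "(monom a :: 'a::field mpoly) * monom b = monom (a + b)"
  unfolding monom_def by (simp add: mult_single)

lemma mdvd_trans: "mdvd a b \<Longrightarrow> mdvd b c \<Longrightarrow> mdvd a c"
  unfolding mdvd_def using order_trans by blast

lemma mdvd_antisym: "mdvd a b \<Longrightarrow> mdvd b a \<Longrightarrow> a = b"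
  unfolding mdvd_def by (intro poly_mapping_eqI) (simp add: order_antisym)

lemma mdvd_add_left: "mdvd u b \<Longrightarrow> mdvd u (a + b)"
  unfolding mdvd_def by (simp add: lookup_add add_increasing)

lemma monomial_ideal_keys_mdvd:
  assumes "p \<in> ideal_gen n ((monom :: _ \<Rightarrow> 'a::field mpoly) ` U)" "t \<in> Poly_Mapping.keys p"
  shows "\<exists>u\<in>U. mdvd u t"
proof -
  define I where "I = {p::'a mpoly. \<forall>t\<in>Poly_Mapping.keys p. \<exists>u\<in>U. mdvd u t}"
  have "is_ideal n I" unfolding is_ideal_def
  proof (intro conjI ballI)
    show "0 \<in> I" unfolding I_def by simp
  next
    fix x y assume "x \<in> I" "y \<in> I"
    then show "x + y \<in> I"
      unfolding I_def using keys_add[of x y] by blast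
  next
    fix p x assume x: "x \<in> I"
    show "p * x \<in> I" unfolding I_def
    proof (rule CollectI, rule ballI)
      fix t assume "t \<in> Poly_Mapping.keys (p * x)"
      then obtain a b where "t = a + b" "b \<in> Poly_Mapping.keys x"
        using keys_mult[of p x] by blast
      then show "\<exists>u\<in>U. mdvd u t" using x mdvd_add_left unfolding I_def by blast
    qed
  qed
  moreover have "monom ` U \<subseteq> I" unfolding I_def by (auto simp: monom_def mdvd_def)
  ultimately have "ideal_gen n (monom ` U) \<subseteq> I" by (rule ideal_gen_least)
  then show ?thesis using assms unfolding I_def by blast
qed

lemma monom_in_monomial_ideal:
  assumes "Poly_Mapping.keys m \<subseteq> {1..n}" "u \<in> U" "mdvd u m"
  shows "(monom m :: 'a::field mpoly) \<in> ideal_gen n (monom ` U)"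
proof -
  have m: "m = (m - u) + u"
    using assms(3) by (intro poly_mapping_eqI) (simp add: lookup_add lookup_minus mdvd_def)
  have "Poly_Mapping.keys (m - u) \<subseteq> Poly_Mapping.keys m"
    by (auto simp: in_keys_iff lookup_minus)
  then have "(monom (m - u) :: 'a mpoly) \<in> polyring n" using assms(1) polyring_monom by blast
  then have "(monom (m - u) :: 'a mpoly) * monom u \<in> ideal_gen n (monom ` U)"
    using assms(2) ideal_gen_base by (blast intro: ideal_gen_mult)
  then show ?thesis by (simp add: monom_mult m[symmetric])
qed

lemma min_monomial_gens_antichain:
  assumes keys: "\<And>u. u \<in> U \<Longrightarrow> Poly_Mapping.keys u \<subseteq> {1..n}"
    and antichain: "\<And>u v. u \<in> U \<Longrightarrow> v \<in> U \<Longrightarrow> mdvd u v \<Longrightarrow> u = v"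
  shows "min_monomial_gens n (ideal_gen n (monom ` U) :: 'a::field mpoly set) = U"
proof (rule set_eqI)
  fix m
  have in_keys: "m \<in> Poly_Mapping.keys (monom m :: 'a mpoly)" for m by (simp add: monom_def)
  have gen: "(monom u :: 'a mpoly) \<in> ideal_gen n (monom ` U)" if "u \<in> U" for u
    using that ideal_gen_base by blast
  show "m \<in> min_monomial_gens n (ideal_gen n (monom ` U) :: 'a mpoly set) \<longleftrightarrow> m \<in> U"
  proof
    assume "m \<in> min_monomial_gens n (ideal_gen n (monom ` U) :: 'a mpoly set)"
    then have m: "(monom m :: 'a mpoly) \<in> ideal_gen n (monom ` U)"
      and minimal: "\<And>m'. Poly_Mapping.keys m' \<subseteq> {1..n} \<Longrightarrow> (monom m' :: 'a mpoly) \<in> ideal_gen n (monom ` U)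
          \<Longrightarrow> mdvd m' m \<Longrightarrow> m' = m"
      unfolding min_monomial_gens_def by auto
    obtain u where "u \<in> U" "mdvd u m"
      using monomial_ideal_keys_mdvd[OF m in_keys] by blast
    then show "m \<in> U" using minimal[OF keys gen] by metis
  next
    assume m: "m \<in> U"
    have "m' = m" if m': "(monom m' :: 'a mpoly) \<in> ideal_gen n (monom ` U)" "mdvd m' m" for m'
    proof -
      obtain u where u: "u \<in> U" "mdvd u m'"
        using monomial_ideal_keys_mdvd[OF m'(1) in_keys] by blast
      then have "u = m" using antichain[OF u(1) m] mdvd_trans m'(2) by blast
      then show "m' = m" using mdvd_antisym m'(2) u(2) by blast
    qed
    then show "m \<in> min_monomial_gens n (ideal_gen n (monom ` U) :: 'a mpoly set)"
      unfolding min_monomial_gens_def using m keys gen by blast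
  qed
qed

lemma poly_mapping_sum_single:
  "p = (\<Sum>t\<in>Poly_Mapping.keys p. Poly_Mapping.single t (Poly_Mapping.lookup p t))"
proof (rule poly_mapping_eqI)
  fix k
  have "Poly_Mapping.lookup (\<Sum>t\<in>Poly_Mapping.keys p. Poly_Mapping.single t (Poly_Mapping.lookup p t)) k
      = (\<Sum>t\<in>Poly_Mapping.keys p. if t = k then Poly_Mapping.lookup p t else 0)"
    unfolding lookup_sum by (intro sum.cong) (auto simp: lookup_single when_def)
  also have "\<dots> = Poly_Mapping.lookup p k"
    by (simp add: sum.delta' in_keys_iff)
  finally show "Poly_Mapping.lookup p k
      = Poly_Mapping.lookup (\<Sum>t\<in>Poly_Mapping.keys p. Poly_Mapping.single t (Poly_Mapping.lookup p t)) k"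
    by simp
qed

lemma lookup_mult_monom:
  "Poly_Mapping.lookup (p * monom m) (t + m) = Poly_Mapping.lookup (p :: 'a::field mpoly) t"
proof -
  have p: "p * monom m = (\<Sum>t'\<in>Poly_Mapping.keys p. Poly_Mapping.single (t' + m) (Poly_Mapping.lookup p t'))"
    by (subst poly_mapping_sum_single[of p]) (simp add: sum_distrib_right monom_def mult_single)
  have "Poly_Mapping.lookup (p * monom m) (t + m)
      = (\<Sum>t'\<in>Poly_Mapping.keys p. if t' = t then Poly_Mapping.lookup p t' else 0)"
    unfolding p lookup_sum by (intro sum.cong) (auto simp: lookup_single when_def)
  then show ?thesis by (simp add: sum.delta' in_keys_iff)
qed

lemma ideal_gen_by_terms:
  assumes "\<And>t. t \<in> Poly_Mapping.keys p \<Longrightarrow> Poly_Mapping.single t (Poly_Mapping.lookup p t) \<in> ideal_gen n G"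
  shows "p \<in> ideal_gen n (G :: 'a::field mpoly set)"
proof -
  have "(\<Sum>t\<in>Poly_Mapping.keys p. Poly_Mapping.single t (Poly_Mapping.lookup p t)) \<in> ideal_gen n G"
    by (rule is_ideal_sum[OF is_ideal_ideal_gen]) (rule assms)
  then show ?thesis by (simp only: poly_mapping_sum_single[symmetric])
qed

lemma single_in_var_ideal:
  assumes "Poly_Mapping.keys t \<subseteq> {1..n}" "v \<in> B" "Poly_Mapping.lookup t v \<noteq> 0"
  shows "Poly_Mapping.single t c \<in> ideal_gen n (var ` B :: 'a::field mpoly set)"
proof -
  define t' where "t' = t - Poly_Mapping.single v 1"
  have t: "t = t' + Poly_Mapping.single v 1"
    using assms(3) unfolding t'_def
    by (intro poly_mapping_eqI) (auto simp: lookup_add lookup_minus lookup_single when_def)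
  have "Poly_Mapping.keys t' \<subseteq> {1..n}"
    using assms(1) unfolding t'_def by (auto simp: in_keys_iff lookup_minus)
  then have "Poly_Mapping.single t' c * var v \<in> ideal_gen n (var ` B :: 'a mpoly set)"
    using assms(2) ideal_gen_base by (blast intro: ideal_gen_mult polyring_single)
  then show ?thesis by (simp add: var_def monom_def mult_single t)
qed

lemma lex_gt_irrefl: "\<not> lex_gt m m"
  unfolding lex_gt_def by auto

lemma lex_gt_asym: "lex_gt a b \<Longrightarrow> \<not> lex_gt b a"
  unfolding lex_gt_def by (metis less_asym linorder_neqE_nat)

lemma lex_sorted_prefix:
  fixes K :: nat
  assumes "bij_betw f {1..K} M"
    and sorted: "\<And>i j. i \<in> {1..K} \<Longrightarrow> j \<in> {1..K} \<Longrightarrow> i < j \<Longrightarrow> lex_gt (f i) (f j)"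
    and i: "i \<in> {1..K}"
  shows "f ` {1..<i} = {u \<in> M. lex_gt u (f i)}"
proof -
  have M: "M = f ` {1..K}" using assms(1) by (simp add: bij_betw_def)
  have "j < i \<longleftrightarrow> lex_gt (f j) (f i)" if "j \<in> {1..K}" for j
    using sorted[OF that i] sorted[OF i that] lex_gt_asym lex_gt_irrefl
    by (cases j i rule: linorder_cases) auto
  then show ?thesis using i unfolding M by fastforce
qed

lemma lex_sorted_last_minimal:
  fixes K :: nat
  assumes "bij_betw f {1..K} M"
    and sorted: "\<And>i j. i \<in> {1..K} \<Longrightarrow> j \<in> {1..K} \<Longrightarrow> i < j \<Longrightarrow> lex_gt (f i) (f j)"
    and "u \<in> M"
  shows "\<not> lex_gt (f K) u"
proof
  assume gt: "lex_gt (f K) u"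
  obtain j where j: "j \<in> {1..K}" "u = f j"
    using assms(1,3) by (auto simp: bij_betw_def)
  then have "j < K \<or> j = K" using j(1) by auto
  then show False
    using gt j sorted[of j K] lex_gt_asym lex_gt_irrefl by fastforce
qed

section \<open>Ideals generated by variables\<close>

lemma sum_apply: "(\<Sum>i\<in>A. f i) x = (\<Sum>i\<in>A. f i x :: 'b::comm_monoid_add)"
  by (induction A rule: infinite_finite_induct) auto

definition linear_part :: "('a::field) mpoly \<Rightarrow> nat \<Rightarrow> 'a" where
  "linear_part p v = Poly_Mapping.lookup p (Poly_Mapping.single v 1)"

lemma linear_part_sum: "linear_part (\<Sum>i\<in>A. f i) = (\<Sum>i\<in>A. linear_part (f i))"
  unfolding linear_part_def by (rule ext) (simp add: lookup_sum sum_apply)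

lemma linear_part_var: "linear_part (var b :: 'a::field mpoly) = (\<lambda>v. if v = b then 1 else 0)"
proof
  fix v
  have "Poly_Mapping.single b (1::nat) = Poly_Mapping.single v 1 \<longleftrightarrow> b = v"
    by (metis lookup_single_eq lookup_single_not_eq zero_neq_one)
  then show "linear_part (var b :: 'a mpoly) v = (if v = b then 1 else 0)"
    unfolding linear_part_def var_def monom_def by (auto simp: lookup_single when_def)
qed

lemma add_eq_single_one_imp_zero:
  assumes "a + b = Poly_Mapping.single (v::nat) (1::nat)" shows "a = 0 \<or> b = 0"
proof (rule ccontr)
  assume "\<not> (a = 0 \<or> b = 0)"
  then obtain x y where x: "Poly_Mapping.lookup a x \<noteq> 0" and y: "Poly_Mapping.lookup b y \<noteq> 0"
    by (metis lookup_zero poly_mapping_eqI)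
  have "Poly_Mapping.lookup a w + Poly_Mapping.lookup b w = (1 when v = w)" for w
    using arg_cong[where f="\<lambda>m. Poly_Mapping.lookup m w", OF assms] by (simp add: lookup_add lookup_single)
  from this[of x] this[of y] x y show False by (auto simp: when_def split: if_splits)
qed

lemma linear_part_mult:
  assumes g0: "Poly_Mapping.lookup (g :: 'a::field mpoly) 0 = 0"
  shows "linear_part (q * g) = (\<lambda>v. Poly_Mapping.lookup q 0 * linear_part g v)"
proof -
  define c where "c = Poly_Mapping.lookup q 0"
  define q' where "q' = q - Poly_Mapping.single 0 c"
  have q: "q = Poly_Mapping.single 0 c + q'" by (simp add: q'_def)
  have q'0: "Poly_Mapping.lookup q' 0 = 0" by (simp add: q'_def c_def lookup_minus)
  have "Poly_Mapping.lookup (q' * g) (Poly_Mapping.single v 1) = 0" for v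
  proof (rule ccontr)
    assume "Poly_Mapping.lookup (q' * g) (Poly_Mapping.single v 1) \<noteq> 0"
    then obtain a b where "Poly_Mapping.single v 1 = a + b" "a \<in> Poly_Mapping.keys q'" "b \<in> Poly_Mapping.keys g"
      using keys_mult[of q' g] by (auto simp: in_keys_iff)
    then show False using add_eq_single_one_imp_zero q'0 g0 by (metis in_keys_iff)
  qed
  moreover have "Poly_Mapping.lookup (Poly_Mapping.single 0 c * p) m = c * Poly_Mapping.lookup p m"
    for p :: "'a mpoly" and m
    unfolding mult_map_scale_conv_mult[symmetric] by (simp add: map.rep_eq when_def)
  ultimately show ?thesis
    unfolding linear_part_def c_def[symmetric] by (subst q) (simp add: distrib_right lookup_add)
qed

text \<open>The linear parts of the variables in \<open>B\<close> are independent and lie in the span of the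
  linear parts of any generating set.\<close>

lemma card_le_card_gens_var_ideal:
  assumes G: "finite G" and B: "finite B"
    and eq: "ideal_gen n G = ideal_gen n (var ` B :: 'a::field mpoly set)"
  shows "card B \<le> card G"
proof -
  interpret V: vector_space "\<lambda>c (f :: nat \<Rightarrow> 'a) v. c * f v"
    by unfold_locales (auto simp: fun_eq_iff algebra_simps)
  have g0: "Poly_Mapping.lookup g 0 = 0" if "g \<in> G" for g
  proof (rule ccontr)
    assume "Poly_Mapping.lookup g 0 \<noteq> 0"
    moreover have "g \<in> ideal_gen n (monom ` (\<lambda>b. Poly_Mapping.single b 1) ` B)"
      using that ideal_gen_base eq by (auto simp: var_def image_image)
    ultimately obtain b where "mdvd (Poly_Mapping.single b 1) 0"
      using monomial_ideal_keys_mdvd[of g n "(\<lambda>b. Poly_Mapping.single b 1) ` B" 0]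
      by (auto simp: in_keys_iff)
    then show False unfolding mdvd_def by (metis lookup_single_eq lookup_zero not_one_le_zero)
  qed
  define e where "e b = linear_part (var b :: 'a mpoly)" for b
  have e: "e b v = (if v = b then 1 else 0)" for b v by (simp add: e_def linear_part_var)
  have inj: "inj_on e B" by (rule inj_onI) (metis e zero_neq_one)
  have "e b \<in> V.span (linear_part ` G)" if "b \<in> B" for b
  proof -
    have "(var b :: 'a mpoly) \<in> ideal_gen n G" using that ideal_gen_base eq by blast
    then obtain A q where A: "var b = (\<Sum>g\<in>A. q g * g)" "A \<subseteq> G"
      unfolding ideal_gen_def by blast
    then have "e b = (\<Sum>g\<in>A. (\<lambda>v. Poly_Mapping.lookup (q g) 0 * linear_part g v))"
      using g0 by (simp add: e_def linear_part_sum linear_part_mult subset_iff)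
    also have "\<dots> \<in> V.span (linear_part ` G)"
      using A(2) by (intro V.span_sum V.span_scale V.span_base) blast
    finally show ?thesis .
  qed
  moreover have "V.independent (e ` B)"
  proof (rule V.independent_if_scalars_zero)
    show "finite (e ` B)" using B by simp
  next
    fix f x assume sum: "(\<Sum>y\<in>e ` B. (\<lambda>v. f y * y v)) = 0" and "x \<in> e ` B"
    then obtain b where b: "b \<in> B" "x = e b" by blast
    have "(\<Sum>y\<in>e ` B. f y * y b) = (\<Sum>b'\<in>B. if b = b' then f (e b') else 0)"
      by (simp add: sum.reindex[OF inj] e if_distrib cong: if_cong)
    also have "\<dots> = f x" using b B by simp
    finally show "f x = 0" using fun_cong[OF sum, of b] by (simp add: sum_apply)
  qed
  ultimately have "card (e ` B) \<le> card (linear_part ` G)"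
    using V.independent_span_bound[OF finite_imageI[OF G]] by blast
  then show ?thesis using card_image_le[OF G, of linear_part] card_image[OF inj] by simp
qed

lemma var_in_polyring: "b \<in> {1..n} \<Longrightarrow> (var b :: 'a::field mpoly) \<in> polyring n"
  unfolding var_def by (rule polyring_monom) simp

lemma homogeneous_var: "homogeneous (var b :: 'a::field mpoly)"
  unfolding homogeneous_def var_def monom_def mdeg_def by simp

lemma linear_form_var: "linear_form (var b :: 'a::field mpoly)"
  unfolding linear_form_def var_def monom_def mdeg_def by simp

lemma min_num_hom_gens_var_ideal:
  assumes "finite B" "B \<subseteq> {1..n}"
  shows "min_num_hom_gens n (ideal_gen n (var ` B :: 'a::field mpoly set)) = card B"
  unfolding min_num_hom_gens_def
proof (rule Least_equality)
  have "inj_on (var :: nat \<Rightarrow> 'a mpoly) B"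
    by (rule inj_onI) (metis linear_part_var zero_neq_one)
  moreover have "var ` B \<subseteq> (polyring n :: 'a mpoly set)"
    using assms(2) var_in_polyring by blast
  ultimately show "\<exists>G. finite G \<and> card G = card B \<and> G \<subseteq> polyring n \<and> (\<forall>g\<in>G. homogeneous g)
      \<and> ideal_gen n G = ideal_gen n (var ` B :: 'a mpoly set)"
    using assms(1) homogeneous_var card_image by (intro exI[of _ "var ` B"]) blast
  show "card B \<le> c" if "\<exists>G. finite G \<and> card G = c \<and> G \<subseteq> polyring n \<and> (\<forall>g\<in>G. homogeneous g)
      \<and> ideal_gen n G = ideal_gen n (var ` B :: 'a mpoly set)" for c
    using that card_le_card_gens_var_ideal assms(1) by blast
qed

section \<open>Products of ideals generated by disjoint sets of variables\<close>

definition select_monom :: "nat \<Rightarrow> (nat \<Rightarrow> nat) \<Rightarrow> monomial" where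
  "select_monom s a = (\<Sum>j\<in>{1..s}. Poly_Mapping.single (a j) 1)"

definition select_monoms :: "nat \<Rightarrow> (nat \<Rightarrow> nat set) \<Rightarrow> monomial set" where
  "select_monoms s F = {select_monom s a | a. \<forall>j\<in>{1..s}. a j \<in> F j}"

lemma select_monom_Suc:
  "select_monom (Suc s) a = select_monom s a + Poly_Mapping.single (a (Suc s)) 1"
  unfolding select_monom_def by simp

lemma select_monom_cong: "(\<And>j. j \<in> {1..s} \<Longrightarrow> a j = b j) \<Longrightarrow> select_monom s a = select_monom s b"
  unfolding select_monom_def by (rule sum.cong) auto

lemma select_monoms_Suc:
  "select_monoms (Suc s) F = {u + Poly_Mapping.single b 1 | u b. u \<in> select_monoms s F \<and> b \<in> F (Suc s)}"
proof (rule set_eqI, rule iffI)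
  fix m assume "m \<in> select_monoms (Suc s) F"
  then obtain a where "\<forall>j\<in>{1..Suc s}. a j \<in> F j" "m = select_monom (Suc s) a"
    unfolding select_monoms_def by blast
  then show "m \<in> {u + Poly_Mapping.single b 1 | u b. u \<in> select_monoms s F \<and> b \<in> F (Suc s)}"
    unfolding select_monoms_def select_monom_Suc by force
next
  fix m assume "m \<in> {u + Poly_Mapping.single b 1 | u b. u \<in> select_monoms s F \<and> b \<in> F (Suc s)}"
  then obtain a b where a: "\<forall>j\<in>{1..s}. a j \<in> F j" and b: "b \<in> F (Suc s)"
    and m: "m = select_monom s a + Poly_Mapping.single b 1"
    unfolding select_monoms_def by blast
  have "select_monom s (a(Suc s := b)) = select_monom s a" by (rule select_monom_cong) simp
  then have "m = select_monom (Suc s) (a(Suc s := b))" by (simp add: m select_monom_Suc)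
  moreover have "\<forall>j\<in>{1..Suc s}. (a(Suc s := b)) j \<in> F j" using a b by (auto simp: le_Suc_eq)
  ultimately show "m \<in> select_monoms (Suc s) F" unfolding select_monoms_def by blast
qed

lemma ideal_prod_var_ideal:
  "ideal_prod n (\<lambda>j. var_ideal n (F j)) s = (ideal_gen n (monom ` select_monoms s F) :: 'a::field mpoly set)"
proof (induction s)
  case 0
  have "select_monoms 0 F = {0}" unfolding select_monoms_def select_monom_def by auto
  then show ?case by (simp add: monom_def ideal_gen_one)
next
  case (Suc s)
  have "{a * b | a b. a \<in> (monom ` select_monoms s F :: 'a mpoly set) \<and> b \<in> var ` F (Suc s)}
      = {monom (u + Poly_Mapping.single b 1) | u b. u \<in> select_monoms s F \<and> b \<in> F (Suc s)}"
    by (auto simp: var_def monom_mult; force simp: monom_mult)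
  also have "\<dots> = monom ` select_monoms (Suc s) F"
    unfolding select_monoms_Suc by blast
  finally show ?case using Suc by (simp add: var_ideal_def ideal_mult_ideal_gen)
qed

definition lower_vars :: "nat \<Rightarrow> (nat \<Rightarrow> nat set) \<Rightarrow> (nat \<Rightarrow> nat) \<Rightarrow> nat set" where
  "lower_vars s F a = {b. \<exists>j\<in>{1..s}. b \<in> F j \<and> b < a j}"

locale disjoint_blocks =
  fixes n s :: nat and F :: "nat \<Rightarrow> nat set"
  assumes blocks_subset: "\<And>j. j \<in> {1..s} \<Longrightarrow> F j \<subseteq> {1..n}"
    and blocks_disjoint: "\<And>i j. i \<in> {1..s} \<Longrightarrow> j \<in> {1..s} \<Longrightarrow> i \<noteq> j \<Longrightarrow> F i \<inter> F j = {}"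
begin

abbreviation selection :: "(nat \<Rightarrow> nat) \<Rightarrow> bool" where
  "selection a \<equiv> \<forall>j\<in>{1..s}. a j \<in> F j"

lemma block_unique: "i \<in> {1..s} \<Longrightarrow> j \<in> {1..s} \<Longrightarrow> x \<in> F i \<Longrightarrow> x \<in> F j \<Longrightarrow> i = j"
  using blocks_disjoint by blast

lemma selection_inj: "selection a \<Longrightarrow> inj_on a {1..s}"
  unfolding inj_on_def using block_unique by metis

lemma selection_upd: "selection a \<Longrightarrow> b \<in> F j \<Longrightarrow> selection (a(j := b))"
  by auto

lemma lookup_select_monom:
  assumes "selection a"
  shows "Poly_Mapping.lookup (select_monom s a) v = (if v \<in> a ` {1..s} then 1 else 0)"
proof -
  have "Poly_Mapping.lookup (select_monom s a) v = (\<Sum>j\<in>{1..s}. (\<lambda>w. if w = v then 1 else 0) (a j))"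
    unfolding select_monom_def lookup_sum by (intro sum.cong) (auto simp: lookup_single when_def)
  also have "\<dots> = (\<Sum>w\<in>a ` {1..s}. if w = v then 1 else 0)"
    by (subst sum.reindex[OF selection_inj[OF assms]]) (simp add: comp_def)
  also have "\<dots> = (if v \<in> a ` {1..s} then 1 else 0)" by (simp add: sum.delta)
  finally show ?thesis .
qed

lemma keys_select_monom: "selection a \<Longrightarrow> Poly_Mapping.keys (select_monom s a) \<subseteq> {1..n}"
  using blocks_subset by (fastforce simp: in_keys_iff lookup_select_monom split: if_splits)

lemma select_monom_mdvd_imp_eq:
  assumes a: "selection a" and b: "selection b"
    and dvd: "mdvd (select_monom s a) (select_monom s b)"
  shows "select_monom s a = select_monom s b"
proof -
  have sub: "a ` {1..s} \<subseteq> b ` {1..s}"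
  proof
    fix v assume "v \<in> a ` {1..s}"
    then have "1 \<le> Poly_Mapping.lookup (select_monom s b) v"
      using dvd lookup_select_monom[OF a, of v] unfolding mdvd_def by metis
    then show "v \<in> b ` {1..s}" by (simp add: lookup_select_monom[OF b] split: if_splits)
  qed
  have "card (a ` {1..s}) = card (b ` {1..s})"
    using card_image[OF selection_inj[OF a]] card_image[OF selection_inj[OF b]] by simp
  then have "a ` {1..s} = b ` {1..s}" using sub by (intro card_subset_eq) auto
  then show ?thesis
    by (intro poly_mapping_eqI) (simp add: lookup_select_monom[OF a] lookup_select_monom[OF b])
qed

lemma min_monomial_gens_ideal_prod:
  "min_monomial_gens n (ideal_prod n (\<lambda>j. var_ideal n (F j)) s :: 'a::field mpoly set) = select_monoms s F"
  unfolding ideal_prod_var_ideal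
proof (rule min_monomial_gens_antichain)
  show "Poly_Mapping.keys u \<subseteq> {1..n}" if "u \<in> select_monoms s F" for u
    using that keys_select_monom unfolding select_monoms_def by blast
  show "u = v" if "u \<in> select_monoms s F" "v \<in> select_monoms s F" "mdvd u v" for u v
    using that select_monom_mdvd_imp_eq unfolding select_monoms_def by blast
qed


abbreviation lex_greater :: "(nat \<Rightarrow> nat) \<Rightarrow> monomial set" where
  "lex_greater a \<equiv> {u \<in> select_monoms s F. lex_gt u (select_monom s a)}"

lemma lex_gt_exchange:
  assumes a: "selection a" and j: "j \<in> {1..s}" and b: "b \<in> F j" "b < a j"
  shows "lex_gt (select_monom s (a(j := b))) (select_monom s a)"
proof -
  have a': "selection (a(j := b))" using selection_upd[OF a b(1)] .
  have "b \<notin> a ` {1..s}"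
    using a j b block_unique by (metis imageE less_irrefl)
  moreover have "b \<in> (a(j := b)) ` {1..s}" using j by force
  moreover have "w \<in> (a(j := b)) ` {1..s} \<longleftrightarrow> w \<in> a ` {1..s}" if "w < b" for w
    using that b(2) j by (force simp: image_iff)
  ultimately show ?thesis unfolding lex_gt_def
    by (intro exI[of _ b]) (simp add: lookup_select_monom[OF a] lookup_select_monom[OF a'])
qed

lemma exchange_mdvd:
  assumes a: "selection a" and j: "j \<in> {1..s}" and b: "b \<in> F j"
  shows "mdvd (select_monom s (a(j := b))) (Poly_Mapping.single b 1 + select_monom s a)"
  unfolding mdvd_def
proof
  fix w
  have a': "selection (a(j := b))" using selection_upd[OF a b] .
  have "w \<in> a ` {1..s}" if "w \<in> (a(j := b)) ` {1..s}" "w \<noteq> b"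
    using that by auto
  then show "Poly_Mapping.lookup (select_monom s (a(j := b))) w
      \<le> Poly_Mapping.lookup (Poly_Mapping.single b 1 + select_monom s a) w"
    by (auto simp: lookup_add lookup_single lookup_select_monom[OF a] lookup_select_monom[OF a'])
qed

lemma lex_gt_select_monom_lower_var:
  assumes a: "selection a" and c: "selection c"
    and lex: "lex_gt (select_monom s c) (select_monom s a)"
  obtains v where "v \<in> lower_vars s F a" "v \<in> c ` {1..s}" "v \<notin> a ` {1..s}"
proof -
  obtain v where v: "Poly_Mapping.lookup (select_monom s a) v < Poly_Mapping.lookup (select_monom s c) v"
    and below: "\<forall>u<v. Poly_Mapping.lookup (select_monom s c) u = Poly_Mapping.lookup (select_monom s a) u"
    using lex unfolding lex_gt_def by blast
  have vc: "v \<in> c ` {1..s}" and va: "v \<notin> a ` {1..s}"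
    using v by (simp_all add: lookup_select_monom[OF a] lookup_select_monom[OF c] split: if_splits)
  obtain j where j: "j \<in> {1..s}" "v = c j" using vc by blast
  have "\<not> a j < v"
  proof
    assume "a j < v"
    then have "a j \<in> c ` {1..s}"
      using below j(1) by (auto simp: lookup_select_monom[OF a] lookup_select_monom[OF c] split: if_splits)
    then obtain i where "i \<in> {1..s}" "a j = c i" by blast
    then have "i = j" using a c j(1) block_unique by metis
    then show False using \<open>a j = c i\<close> j va by (metis image_eqI)
  qed
  moreover have "a j \<noteq> v" using va j(1) by blast
  ultimately have "v \<in> lower_vars s F a"
    unfolding lower_vars_def using c j by force
  then show ?thesis using that vc va by blast
qed

lemma lower_var_ideal_subset_colon:
  assumes a: "selection a"
  shows "ideal_gen n (var ` lower_vars s F a)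
    \<subseteq> colon n (ideal_gen n (monom ` lex_greater a)) (monom (select_monom s a) :: 'a::field mpoly)"
proof (rule ideal_gen_least[OF is_ideal_colon[OF is_ideal_ideal_gen]], rule image_subsetI)
  fix b assume "b \<in> lower_vars s F a"
  then obtain j where j: "j \<in> {1..s}" "b \<in> F j" "b < a j" unfolding lower_vars_def by blast
  have b: "Poly_Mapping.keys (Poly_Mapping.single b (1::nat)) \<subseteq> {1..n}"
    using blocks_subset[OF j(1)] j(2) by auto
  let ?m = "Poly_Mapping.single b 1 + select_monom s a"
  have "select_monom s (a(j := b)) \<in> lex_greater a"
    using lex_gt_exchange[OF a j] selection_upd[OF a j(2)] unfolding select_monoms_def by blast
  moreover have "Poly_Mapping.keys ?m \<subseteq> {1..n}"
    using b keys_select_monom[OF a] keys_add[of "Poly_Mapping.single b (1::nat)" "select_monom s a"]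
    by (simp add: subset_iff) blast
  ultimately have "(monom ?m :: 'a mpoly) \<in> ideal_gen n (monom ` lex_greater a)"
    by (intro monom_in_monomial_ideal[OF _ _ exchange_mdvd[OF a j(1,2)]])
  moreover have "(var b :: 'a mpoly) \<in> polyring n"
    unfolding var_def using b by (rule polyring_monom)
  ultimately show "(var b :: 'a mpoly) \<in> colon n (ideal_gen n (monom ` lex_greater a)) (monom (select_monom s a))"
    unfolding colon_def by (simp add: var_def monom_mult)
qed

lemma colon_subset_lower_var_ideal:
  assumes a: "selection a"
  shows "colon n (ideal_gen n (monom ` lex_greater a)) (monom (select_monom s a) :: 'a::field mpoly)
    \<subseteq> ideal_gen n (var ` lower_vars s F a)"
proof
  fix x :: "'a mpoly"
  assume "x \<in> colon n (ideal_gen n (monom ` lex_greater a)) (monom (select_monom s a))"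
  then have x: "x \<in> polyring n" and xI: "x * monom (select_monom s a) \<in> ideal_gen n (monom ` lex_greater a)"
    unfolding colon_def by auto
  show "x \<in> ideal_gen n (var ` lower_vars s F a)"
  proof (rule ideal_gen_by_terms)
    fix t assume t: "t \<in> Poly_Mapping.keys x"
    then have "t + select_monom s a \<in> Poly_Mapping.keys (x * monom (select_monom s a))"
      by (simp add: in_keys_iff lookup_mult_monom)
    then obtain c where c: "selection c" and lex: "lex_gt (select_monom s c) (select_monom s a)"
      and dvd: "mdvd (select_monom s c) (t + select_monom s a)"
      using monomial_ideal_keys_mdvd[OF xI] unfolding select_monoms_def by blast
    obtain v where v: "v \<in> lower_vars s F a" "v \<in> c ` {1..s}" "v \<notin> a ` {1..s}"
      using lex_gt_select_monom_lower_var[OF a c lex] .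
    then have tv: "Poly_Mapping.lookup t v \<noteq> 0"
      using dvd unfolding mdvd_def
      by (metis add.right_neutral le_zero_eq lookup_add lookup_select_monom[OF a] lookup_select_monom[OF c] zero_neq_one)
    have "Poly_Mapping.keys t \<subseteq> {1..n}" using x t unfolding polyring_def by blast
    then show "Poly_Mapping.single t (Poly_Mapping.lookup x t) \<in> ideal_gen n (var ` lower_vars s F a)"
      using v(1) tv by (rule single_in_var_ideal)
  qed
qed

lemma colon_lex_greater:
  "selection a \<Longrightarrow> colon n (ideal_gen n (monom ` lex_greater a)) (monom (select_monom s a) :: 'a::field mpoly)
    = ideal_gen n (var ` lower_vars s F a)"
  by (intro antisym colon_subset_lower_var_ideal lower_var_ideal_subset_colon)


lemma lower_vars_subset: "lower_vars s F a \<subseteq> {1..n}"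
  unfolding lower_vars_def using blocks_subset by blast

lemma lower_vars_subset_UN: "lower_vars s F a \<subseteq> (\<Union>j\<in>{1..s}. F j - {a j})"
  unfolding lower_vars_def by auto

lemma lower_vars_Max:
  assumes "\<And>j. j \<in> {1..s} \<Longrightarrow> finite (F j)" "\<And>j. j \<in> {1..s} \<Longrightarrow> a j = Max (F j)"
  shows "lower_vars s F a = (\<Union>j\<in>{1..s}. F j - {a j})"
  using assms lower_vars_subset_UN unfolding lower_vars_def
  by (auto simp: order.not_eq_order_implies_strict)

lemma card_UN_blocks_Diff:
  assumes "selection a" "\<And>j. j \<in> {1..s} \<Longrightarrow> finite (F j)"
  shows "card (\<Union>j\<in>{1..s}. F j - {a j}) = (\<Sum>j\<in>{1..s}. card (F j) - 1)"
proof -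
  have "card (\<Union>j\<in>{1..s}. F j - {a j}) = (\<Sum>j\<in>{1..s}. card (F j - {a j}))"
    using assms(2) blocks_disjoint by (intro card_UN_disjoint) blast+
  also have "\<dots> = (\<Sum>j\<in>{1..s}. card (F j) - 1)"
    using assms by (intro sum.cong) simp_all
  finally show ?thesis .
qed

lemma card_lower_vars_le:
  assumes "selection a" "\<And>j. j \<in> {1..s} \<Longrightarrow> finite (F j)"
  shows "card (lower_vars s F a) \<le> (\<Sum>j\<in>{1..s}. card (F j) - 1)"
proof -
  have "finite (\<Union>j\<in>{1..s}. F j - {a j})" using assms(2) by blast
  then show ?thesis
    using card_mono[OF _ lower_vars_subset_UN[of a]] card_UN_blocks_Diff[OF assms] by simp
qed

lemma lex_minimal_selection_Max:
  assumes a: "selection a" and j: "j \<in> {1..s}" and fin: "finite (F j)"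
    and minimal: "\<And>u. u \<in> select_monoms s F \<Longrightarrow> \<not> lex_gt (select_monom s a) u"
  shows "a j = Max (F j)"
proof (rule ccontr)
  assume "a j \<noteq> Max (F j)"
  moreover have "a j \<le> Max (F j)" using a j fin by simp
  moreover have "Max (F j) \<in> F j" using a j fin by (intro Max_in) auto
  ultimately have lt: "a j < Max (F j)" by simp
  define c where "c = a(j := Max (F j))"
  have c: "selection c" unfolding c_def by (rule selection_upd[OF a \<open>Max (F j) \<in> F j\<close>])
  have "lex_gt (select_monom s (c(j := a j))) (select_monom s c)"
    using a j lt by (intro lex_gt_exchange[OF c j]) (auto simp: c_def)
  moreover have "c(j := a j) = a" by (simp add: c_def)
  moreover have "select_monom s c \<in> select_monoms s F" using c unfolding select_monoms_def by blast
  ultimately show False using minimal by simp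
qed

lemma min_num_hom_gens_lower_var_ideal:
  "min_num_hom_gens n (ideal_gen n (var ` lower_vars s F a) :: 'a::field mpoly set) = card (lower_vars s F a)"
  using finite_subset[OF lower_vars_subset] lower_vars_subset by (rule min_num_hom_gens_var_ideal) simp

end

locale lex_enumeration = disjoint_blocks +
  fixes K :: nat and f :: "nat \<Rightarrow> monomial"
  assumes enum_bij: "bij_betw f {1..K} (select_monoms s F)"
    and enum_sorted: "\<And>i j. i \<in> {1..K} \<Longrightarrow> j \<in> {1..K} \<Longrightarrow> i < j \<Longrightarrow> lex_gt (f i) (f j)"
    and finite_blocks: "\<And>j. j \<in> {1..s} \<Longrightarrow> finite (F j)"
begin

abbreviation enum_colon :: "nat \<Rightarrow> 'a::field mpoly set" where
  "enum_colon i \<equiv> colon n (ideal_gen n (monom ` f ` {1..<i})) (monom (f i))"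

lemma enum_colon_eq:
  assumes i: "i \<in> {1..K}"
  obtains a where "selection a" "f i = select_monom s a"
    "enum_colon i = ideal_gen n (var ` lower_vars s F a)"
proof -
  obtain a where a: "selection a" "f i = select_monom s a"
    using enum_bij i unfolding bij_betw_def select_monoms_def by blast
  have "enum_colon i = ideal_gen n (var ` lower_vars s F a)"
    using colon_lex_greater[OF a(1)] lex_sorted_prefix[OF enum_bij enum_sorted i] a(2) by simp
  then show ?thesis by (rule that[OF a])
qed

lemma enum_colon_linear_gens:
  assumes "i \<in> {1..K}"
  shows "\<exists>G. G \<subseteq> polyring n \<and> (\<forall>g\<in>G. linear_form g) \<and> ideal_gen n G = (enum_colon i :: 'a::field mpoly set)"
proof -
  obtain a where "enum_colon i = (ideal_gen n (var ` lower_vars s F a) :: 'a mpoly set)"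
    using enum_colon_eq[OF assms] .
  moreover have "var ` lower_vars s F a \<subseteq> (polyring n :: 'a mpoly set)"
    using lower_vars_subset var_in_polyring by blast
  ultimately show ?thesis using linear_form_var by (intro exI[of _ "var ` lower_vars s F a"]) auto
qed

lemma min_num_hom_gens_enum_colon_le:
  assumes "i \<in> {1..K}"
  shows "min_num_hom_gens n (enum_colon i :: 'a::field mpoly set) \<le> (\<Sum>j\<in>{1..s}. card (F j) - 1)"
proof -
  obtain a where "selection a" "enum_colon i = (ideal_gen n (var ` lower_vars s F a) :: 'a mpoly set)"
    using enum_colon_eq[OF assms] .
  then show ?thesis
    using card_lower_vars_le finite_blocks min_num_hom_gens_lower_var_ideal by metis
qed

text \<open>The last generator is the lex-smallest one, so it selects the largest element of every block.\<close>

lemma min_num_hom_gens_enum_colon_last: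
  assumes "1 \<le> K"
  shows "min_num_hom_gens n (enum_colon K :: 'a::field mpoly set) = (\<Sum>j\<in>{1..s}. card (F j) - 1)"
proof -
  obtain a where a: "selection a" "f K = select_monom s a"
    and colon: "enum_colon K = (ideal_gen n (var ` lower_vars s F a) :: 'a mpoly set)"
    using enum_colon_eq assms by auto
  have "min_num_hom_gens n (enum_colon K :: 'a mpoly set) = card (lower_vars s F a)"
    using colon min_num_hom_gens_lower_var_ideal by simp
  also have "lower_vars s F a = (\<Union>j\<in>{1..s}. F j - {a j})"
  proof (rule lower_vars_Max[OF finite_blocks])
    show "a j = Max (F j)" if "j \<in> {1..s}" for j
      using lex_minimal_selection_Max[OF a(1) that finite_blocks[OF that]]
        lex_sorted_last_minimal[OF enum_bij enum_sorted] a(2)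
      by metis
  qed
  also have "card \<dots> = (\<Sum>j\<in>{1..s}. card (F j) - 1)"
    by (rule card_UN_blocks_Diff[OF a(1) finite_blocks])
  finally show ?thesis .
qed

end

theorem lemma3p1:
  fixes n k s :: nat and F :: "nat \<Rightarrow> nat set" and f :: "nat \<Rightarrow> monomial"
  assumes "s \<ge> 1" and "k > 1"
    and "\<And>j. j \<in> {1..s} \<Longrightarrow> F j \<subseteq> {1..n}"
    and "\<And>j. j \<in> {1..s} \<Longrightarrow> card (F j) = k"
    and "\<And>i j. i \<in> {1..s} \<Longrightarrow> j \<in> {1..s} \<Longrightarrow> i \<noteq> j \<Longrightarrow> F i \<inter> F j = {}"
    and "bij_betw f {1..k ^ s}
           (min_monomial_gens n (ideal_prod n (\<lambda>j. var_ideal n (F j)) s :: 'a::field mpoly set))"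
    and "\<And>i j. i \<in> {1..k ^ s} \<Longrightarrow> j \<in> {1..k ^ s} \<Longrightarrow> i < j \<Longrightarrow> lex_gt (f i) (f j)"
  defines "N \<equiv> (\<lambda>i. min_num_hom_gens n
                    (colon n (ideal_gen n (monom ` f ` {1..<i})) (monom (f i) :: 'a mpoly)))"
  shows "Max (N ` {2..k ^ s}) = N (k ^ s) \<and> N (k ^ s) = (k - 1) * s
    \<and> (\<forall>i\<in>{1..k ^ s}. \<exists>G. G \<subseteq> polyring n \<and> (\<forall>g\<in>G. linear_form g)
          \<and> ideal_gen n G = colon n (ideal_gen n (monom ` f ` {1..<i})) (monom (f i) :: 'a mpoly))"
proof -
  interpret disjoint_blocks n s F using assms(3,5) by unfold_locales
  interpret lex_enumeration n s F "k ^ s" f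
  proof
    show "bij_betw f {1..k ^ s} (select_monoms s F)"
      using assms(6) by (simp add: min_monomial_gens_ideal_prod)
    show "finite (F j)" if "j \<in> {1..s}" for j
      using assms(2) assms(4)[OF that] by (auto intro: card_ge_0_finite)
  qed (fact assms(7))
  have sum_F: "(\<Sum>j\<in>{1..s}. card (F j) - 1) = (k - 1) * s"
    using assms(4) by (simp add: mult.commute)
  have "2 \<le> k ^ s" using self_le_power[of k s] assms(1,2) by simp
  then have last: "N (k ^ s) = (k - 1) * s"
    unfolding N_def using min_num_hom_gens_enum_colon_last sum_F by simp
  have "Max (N ` {2..k ^ s}) = N (k ^ s)"
  proof (rule Max_eqI)
    show "N (k ^ s) \<in> N ` {2..k ^ s}" using \<open>2 \<le> k ^ s\<close> by simp
    show "y \<le> N (k ^ s)" if y: "y \<in> N ` {2..k ^ s}" for y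
    proof -
      obtain i where "i \<in> {2..k ^ s}" "y = N i" using y by blast
      then show ?thesis
        using min_num_hom_gens_enum_colon_le[of i] sum_F last unfolding N_def by simp
    qed
  qed simp
  then show ?thesis using last enum_colon_linear_gens by blast
qed

end
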